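(* Let $X_1,\dots,X_n$ be i.i.d. with c.d.f. $F$ and mean $\mu$, let $p\geq1$ with $\nu_p<+\infty$. Let $k_1,k_2\in\mathbb{N}$ with $k_1+k_2<n$ and $k_{\min}:=\min\{k_1,k_2\}>0$. Then for any $t>0$, \[\Pr\left(\Delta_{n,k_1,k_2}>t\,\nu_p\left(\frac{n}{k_{\min}}\right)^{1/p}\right)\leq\left(\frac{e\,2^p\,\rho_{F,p}\left(\frac{2^p}{t^p}\frac{k_{\min}}{n}\right)^p}{t^p}\right)^{k_{\min}}.\]
   Context: $\nu_p:=(\mathbb{E}|X_1-\mu|^p)^{1/p}$. With order statistics $X_{(1)}\le\dots\le X_{(n)}$, the $(k_1,k_2)$-width is $\Delta_{n,k_1,k_2}:=X_{(n-k_2+1)}-X_{(k_1)}$. For $\xi>0$, $\rho_{F,p}(\xi):=\sup\{(\mathbb{E}[|X_1-\mu|^pZ])^{1/p}/\nu_p: 0\le Z\le1 \text{ a random variable (jointly defined with }X_1), \mathbb{E}Z\le\xi\}$ if $\nu_p>0$, and $0$ if $\nu_p=0$. *)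

theory Defs
  imports "HOL-Probability.Probability"
begin

definition nu_p :: "'a measure \<Rightarrow> ('a \<Rightarrow> real) \<Rightarrow> real \<Rightarrow> real" where
  "nu_p M Y p = (\<integral>x. \<bar>Y x - (\<integral>y. Y y \<partial>M)\<bar> powr p \<partial>M) powr (1 / p)"

text \<open>rho_{F,p}(xi): supremum over random variables Z on the same probability
  space as Y (i.e. jointly defined with Y), with 0 <= Z <= 1 and E Z <= xi.\<close>
definition rho_Fp :: "'a measure \<Rightarrow> ('a \<Rightarrow> real) \<Rightarrow> real \<Rightarrow> real \<Rightarrow> real" where
  "rho_Fp M Y p xi =
     (if nu_p M Y p = 0 then 0
      else Sup {(\<integral>x. \<bar>Y x - (\<integral>y. Y y \<partial>M)\<bar> powr p * Z x \<partial>M) powr (1 / p) / nu_p M Y p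
                | Z. Z \<in> borel_measurable M \<and> (\<forall>x\<in>space M. 0 \<le> Z x \<and> Z x \<le> 1)
                     \<and> (\<integral>x. Z x \<partial>M) \<le> xi})"

definition order_stat :: "real list \<Rightarrow> nat \<Rightarrow> real" where
  "order_stat xs k = sort xs ! (k - 1)"

definition width :: "nat \<Rightarrow> nat \<Rightarrow> nat \<Rightarrow> (nat \<Rightarrow> 'a \<Rightarrow> real) \<Rightarrow> 'a \<Rightarrow> real" where
  "width n k1 k2 X w =
     (let xs = map (\<lambda>i. X i w) [0..<n] in order_stat xs (n - k2 + 1) - order_stat xs k1)"

end

theory Submission
  imports Defs
begin

(*
  With k = min k1 k2 and u = (t/2) (n/k)^(1/p): if the width exceeds 2 u nu, then whichever
  half of the gap between the two order statistics contains the mean, at least k sample points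
  deviate from the mean by more than u nu.  A union bound over k-subsets of these independent
  events bounds the probability by C(n,k) q^k <= (e n q / k)^k, where q = P(|X - mu| > u nu).
  By Markov q <= u^-p = 2^p k / (t^p n), so the indicator of that event is admissible for
  rho_F,p(u^-p), which gives (u nu)^p q <= rho_F,p(u^-p)^p nu^p.
*)

lemma power_div_fact_le_exp:
  fixes x :: real
  assumes "0 \<le> x"
  shows "x ^ k / fact k \<le> exp x"
proof -
  have "(\<Sum>n\<in>{k}. x ^ n /\<^sub>R fact n) \<le> (\<Sum>n. x ^ n /\<^sub>R fact n)"
    by (rule sum_le_suminf) (use assms summable_exp_generic[of x] in auto)
  then show ?thesis by (simp add: exp_def divide_inverse mult.commute)
qed

lemma binomial_le_exp_pow:
  assumes "0 < k"
  shows "real (n choose k) \<le> (exp 1 * real n / real k) ^ k"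
proof -
  have fact_bound: "real (n choose k) * fact k \<le> real n ^ k"
    by (metis binomial_fact_pow of_nat_fact of_nat_le_iff of_nat_mult of_nat_power)
  have "real k ^ k \<le> exp 1 ^ k * fact k"
    using power_div_fact_le_exp[of "real k" k] exp_of_nat_mult[of k "1::real"]
    by (simp add: field_simps)
  then have "real (n choose k) * real k ^ k \<le> real (n choose k) * (exp 1 ^ k * fact k)"
    by (rule mult_left_mono) simp
  also have "\<dots> = exp 1 ^ k * (real (n choose k) * fact k)"
    by (simp add: ac_simps)
  also have "\<dots> \<le> exp 1 ^ k * real n ^ k"
    using fact_bound by (rule mult_left_mono) simp
  finally show ?thesis
    using assms by (simp add: power_divide power_mult_distrib pos_le_divide_eq)
qed

lemma card_nth_sort:
  "card {i. i < length xs \<and> P (sort xs ! i)} = card {i. i < length xs \<and> P (xs ! i)}"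
proof -
  have "length (filter P (sort xs)) = length (filter P xs)"
    by (metis mset_filter mset_sort size_mset)
  then show ?thesis by (simp add: length_filter_conv_card)
qed

lemma card_order_stat_le_nth:
  assumes "0 < k" "k \<le> length xs"
  shows "length xs - k + 1 \<le> card {i. i < length xs \<and> order_stat xs k \<le> xs ! i}"
proof -
  have "{k - 1..<length xs} \<subseteq> {i. i < length xs \<and> order_stat xs k \<le> sort xs ! i}"
    using assms by (auto simp: order_stat_def intro: sorted_nth_mono)
  from card_mono[OF _ this] show ?thesis
    using assms by (simp add: card_nth_sort)
qed

lemma card_nth_le_order_stat:
  assumes "0 < k" "k \<le> length xs"
  shows "k \<le> card {i. i < length xs \<and> xs ! i \<le> order_stat xs k}"
proof -
  have "{..<k} \<subseteq> {i. i < length xs \<and> sort xs ! i \<le> order_stat xs k}"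
    using assms by (auto simp: order_stat_def intro: sorted_nth_mono)
  from card_mono[OF _ this] show ?thesis
    by (simp add: card_nth_sort[of xs "\<lambda>x. x \<le> order_stat xs k"])
qed

lemma min_le_card_far_if_width_gt:
  fixes X :: "nat \<Rightarrow> 'a \<Rightarrow> real"
  assumes k1: "0 < k1" "k1 \<le> n" and k2: "0 < k2" "k2 \<le> n"
    and wide: "2 * r < width n k1 k2 X w"
  shows "min k1 k2 \<le> card {i \<in> {0..<n}. r < \<bar>X i w - c\<bar>}"
proof -
  define xs where "xs = map (\<lambda>i. X i w) [0..<n]"
  define a where "a = order_stat xs (n - k2 + 1)"
  define b where "b = order_stat xs k1"
  have xs: "length xs = n" "\<And>i. i < n \<Longrightarrow> xs ! i = X i w" by (simp_all add: xs_def)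
  have far: "{i. i < length xs \<and> r < \<bar>xs ! i - c\<bar>} = {i \<in> {0..<n}. r < \<bar>X i w - c\<bar>}"
    using xs by auto
  have "2 * r < a - b" using wide by (simp add: width_def Let_def a_def b_def xs_def)
  show ?thesis
  proof (cases "c \<le> (a + b) / 2")
    case True
    have "k2 \<le> card {i. i < length xs \<and> a \<le> xs ! i}"
      using card_order_stat_le_nth[of "n - k2 + 1" xs] xs k2 by (simp add: a_def)
    also have "\<dots> \<le> card {i. i < length xs \<and> r < \<bar>xs ! i - c\<bar>}"
      using True \<open>2 * r < a - b\<close> by (intro card_mono) auto
    finally show ?thesis using far by simp
  next
    case False
    have "k1 \<le> card {i. i < length xs \<and> xs ! i \<le> b}"
      using card_nth_le_order_stat[of k1 xs] xs k1 by (simp add: b_def)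
    also have "\<dots> \<le> card {i. i < length xs \<and> r < \<bar>xs ! i - c\<bar>}"
      using False \<open>2 * r < a - b\<close> by (intro card_mono) auto
    finally show ?thesis using far by simp
  qed
qed

lemma Collect_card_ge_eq_UN_INT:
  assumes "finite I" "0 < k"
  shows "{w. k \<le> card {i \<in> I. w \<in> A i}} = (\<Union>S\<in>{S. S \<subseteq> I \<and> card S = k}. \<Inter>i\<in>S. A i)"
proof (intro equalityI subsetI)
  fix w assume "w \<in> {w. k \<le> card {i \<in> I. w \<in> A i}}"
  then obtain S where "S \<subseteq> {i \<in> I. w \<in> A i}" "card S = k"
    by (auto elim: obtain_subset_with_card_n)
  then show "w \<in> (\<Union>S\<in>{S. S \<subseteq> I \<and> card S = k}. \<Inter>i\<in>S. A i)" by blast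
next
  fix w assume "w \<in> (\<Union>S\<in>{S. S \<subseteq> I \<and> card S = k}. \<Inter>i\<in>S. A i)"
  then obtain S where S: "S \<subseteq> I" "card S = k" "\<And>i. i \<in> S \<Longrightarrow> w \<in> A i" by blast
  then have "card S \<le> card {i \<in> I. w \<in> A i}"
    by (intro card_mono) (use assms(1) in auto)
  then show "w \<in> {w. k \<le> card {i \<in> I. w \<in> A i}}" using S(2) by simp
qed

lemma (in prob_space) prob_card_indep_events_ge:
  assumes indep: "indep_events A I" and "finite I" and "0 < k"
    and prob_eq: "\<And>i. i \<in> I \<Longrightarrow> prob (A i) = q"
  shows "{w \<in> space M. k \<le> card {i \<in> I. w \<in> A i}} \<in> events"
    and "prob {w \<in> space M. k \<le> card {i \<in> I. w \<in> A i}} \<le> real (card I choose k) * q ^ k"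
proof -
  define \<S> where "\<S> = {S. S \<subseteq> I \<and> card S = k}"
  have "finite \<S>" unfolding \<S>_def by (rule finite_subset[of _ "Pow I"]) (use \<open>finite I\<close> in auto)
  have S: "finite S" "S \<noteq> {}" "S \<subseteq> I" "card S = k" if "S \<in> \<S>" for S
    using that \<open>finite I\<close> \<open>0 < k\<close> by (auto simp: \<S>_def intro: finite_subset)
  have INT_events: "(\<Inter>i\<in>S. A i) \<in> events" if "S \<in> \<S>" for S
    using S[OF that] indep by (intro sets.finite_INT) (auto simp: indep_events_def)
  have "{w \<in> space M. k \<le> card {i \<in> I. w \<in> A i}} = space M \<inter> {w. k \<le> card {i \<in> I. w \<in> A i}}"
    by blast
  also have "\<dots> = space M \<inter> (\<Union>S\<in>\<S>. \<Inter>i\<in>S. A i)"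
    unfolding \<S>_def by (simp only: Collect_card_ge_eq_UN_INT[OF \<open>finite I\<close> \<open>0 < k\<close>])
  also have "\<dots> = (\<Union>S\<in>\<S>. \<Inter>i\<in>S. A i)"
    using INT_events sets.sets_into_space by blast
  finally have eq: "{w \<in> space M. k \<le> card {i \<in> I. w \<in> A i}} = (\<Union>S\<in>\<S>. \<Inter>i\<in>S. A i)" .
  show "{w \<in> space M. k \<le> card {i \<in> I. w \<in> A i}} \<in> events"
    unfolding eq using \<open>finite \<S>\<close> INT_events by (rule sets.finite_UN)
  have "prob {w \<in> space M. k \<le> card {i \<in> I. w \<in> A i}} \<le> (\<Sum>S\<in>\<S>. prob (\<Inter>i\<in>S. A i))"
    unfolding eq using \<open>finite \<S>\<close> INT_events by (rule measure_UNION_le)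
  also have "\<dots> = (\<Sum>S\<in>\<S>. q ^ k)"
  proof (rule sum.cong)
    fix S assume "S \<in> \<S>"
    then have "prob (\<Inter>i\<in>S. A i) = (\<Prod>i\<in>S. prob (A i))"
      using indep S[of S] unfolding indep_events_def by blast
    also have "\<dots> = (\<Prod>i\<in>S. q)"
      using S[OF \<open>S \<in> \<S>\<close>] prob_eq by (intro prod.cong) auto
    finally show "prob (\<Inter>i\<in>S. A i) = q ^ k"
      using S[OF \<open>S \<in> \<S>\<close>] by simp
  qed simp
  also have "\<dots> = real (card I choose k) * q ^ k"
    using n_subsets[OF \<open>finite I\<close>, of k] by (simp add: \<S>_def)
  finally show "prob {w \<in> space M. k \<le> card {i \<in> I. w \<in> A i}} \<le> real (card I choose k) * q ^ k" .
qed

lemma nu_p_powr: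
  assumes "0 < p"
  shows "nu_p M Y p powr p = (\<integral>x. \<bar>Y x - (\<integral>y. Y y \<partial>M)\<bar> powr p \<partial>M)"
  using assms by (simp add: nu_p_def powr_powr integral_nonneg)

lemma weighted_integral_bounds:
  fixes f W :: "'a \<Rightarrow> real"
  assumes f: "integrable M f" "\<And>x. x \<in> space M \<Longrightarrow> 0 \<le> f x"
    and W: "\<And>x. x \<in> space M \<Longrightarrow> 0 \<le> W x \<and> W x \<le> 1"
  shows "0 \<le> (\<integral>x. f x * W x \<partial>M)" and "(\<integral>x. f x * W x \<partial>M) \<le> (\<integral>x. f x \<partial>M)"
proof -
  show "0 \<le> (\<integral>x. f x * W x \<partial>M)" using f W by (intro integral_nonneg_AE AE_I2) auto
  show "(\<integral>x. f x * W x \<partial>M) \<le> (\<integral>x. f x \<partial>M)"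
  proof (cases "integrable M (\<lambda>x. f x * W x)")
    case True
    then show ?thesis
      using f W by (intro integral_mono) (auto intro: mult_left_le)
  next
    case False
    then show ?thesis using f by (simp add: not_integrable_integral_eq integral_nonneg)
  qed
qed

lemma weighted_central_moment_le_rho_Fp:
  fixes Y Z :: "'a \<Rightarrow> real"
  assumes moment: "integrable M (\<lambda>x. \<bar>Y x - (\<integral>y. Y y \<partial>M)\<bar> powr p)"
    and "0 < p" and nu: "0 < nu_p M Y p"
    and Z: "Z \<in> borel_measurable M" "\<And>x. x \<in> space M \<Longrightarrow> 0 \<le> Z x \<and> Z x \<le> 1"
      "(\<integral>x. Z x \<partial>M) \<le> xi"
  shows "(\<integral>x. \<bar>Y x - (\<integral>y. Y y \<partial>M)\<bar> powr p * Z x \<partial>M)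
           \<le> rho_Fp M Y p xi powr p * nu_p M Y p powr p"
proof -
  let ?f = "\<lambda>x. \<bar>Y x - (\<integral>y. Y y \<partial>M)\<bar> powr p"
  let ?nu = "nu_p M Y p" and ?rho = "rho_Fp M Y p xi"
  let ?S = "{(\<integral>x. ?f x * W x \<partial>M) powr (1 / p) / ?nu
              | W. W \<in> borel_measurable M \<and> (\<forall>x\<in>space M. 0 \<le> W x \<and> W x \<le> 1)
                   \<and> (\<integral>x. W x \<partial>M) \<le> xi}"
  note bounds = weighted_integral_bounds[OF moment, of W for W, simplified]
  have "bdd_above ?S"
  proof (rule bdd_aboveI[where M = 1])
    fix y assume "y \<in> ?S"
    then obtain W where W: "\<forall>x\<in>space M. 0 \<le> W x \<and> W x \<le> 1"
      and y: "y = (\<integral>x. ?f x * W x \<partial>M) powr (1 / p) / ?nu" by blast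
    have "(\<integral>x. ?f x * W x \<partial>M) powr (1 / p) \<le> (\<integral>x. ?f x \<partial>M) powr (1 / p)"
      using bounds[of W] W \<open>0 < p\<close> by (intro powr_mono2) auto
    then show "y \<le> 1" using y nu by (simp add: nu_p_def)
  qed
  moreover have "(\<integral>x. ?f x * Z x \<partial>M) powr (1 / p) / ?nu \<in> ?S" using Z by blast
  ultimately have "(\<integral>x. ?f x * Z x \<partial>M) powr (1 / p) / ?nu \<le> Sup ?S"
    by (intro cSup_upper)
  also have "Sup ?S = ?rho" using nu by (simp add: rho_Fp_def)
  finally have "(\<integral>x. ?f x * Z x \<partial>M) powr (1 / p) / ?nu \<le> ?rho" .
  then have "((\<integral>x. ?f x * Z x \<partial>M) powr (1 / p)) powr p \<le> (?rho * ?nu) powr p"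
    using nu \<open>0 < p\<close> by (intro powr_mono2) (auto simp: pos_divide_le_eq)
  then show ?thesis
    using bounds[of Z] Z nu \<open>0 < p\<close> by (simp add: powr_powr powr_mult)
qed

lemma prob_central_deviation_le_rho_Fp:
  fixes Y :: "'a \<Rightarrow> real"
  assumes "prob_space M" and Y: "Y \<in> borel_measurable M"
    and moment: "integrable M (\<lambda>x. \<bar>Y x - (\<integral>y. Y y \<partial>M)\<bar> powr p)"
    and "0 < p" "0 < u"
  shows "measure M {x \<in> space M. u * nu_p M Y p < \<bar>Y x - (\<integral>y. Y y \<partial>M)\<bar>}
           \<le> rho_Fp M Y p (1 / u powr p) powr p / u powr p"
proof -
  interpret prob_space M by fact
  let ?f = "\<lambda>x. \<bar>Y x - (\<integral>y. Y y \<partial>M)\<bar> powr p"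
  let ?nu = "nu_p M Y p" and ?rho = "rho_Fp M Y p (1 / u powr p)"
  define A where "A = {x \<in> space M. u * ?nu < \<bar>Y x - (\<integral>y. Y y \<partial>M)\<bar>}"
  have A: "A \<in> events" unfolding A_def using Y by measurable
  have moment_eq: "(\<integral>x. ?f x \<partial>M) = ?nu powr p" by (rule nu_p_powr[OF \<open>0 < p\<close>, symmetric])
  show ?thesis
  proof (cases "?nu = 0")
    case True
    then have "(\<integral>x. ?f x \<partial>M) = 0"
      using moment_eq \<open>0 < p\<close> by simp
    then have "AE x in M. ?f x = 0"
      using integral_nonneg_eq_0_iff_AE[OF moment] by simp
    then have "AE x in M. \<not> u * ?nu < \<bar>Y x - (\<integral>y. Y y \<partial>M)\<bar>"
      by eventually_elim (simp add: True)
    then show ?thesis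
      by (simp only: prob_eq_0_AE order_refl divide_nonneg_nonneg powr_ge_zero)
  next
    case False
    then have nu: "0 < ?nu" by (simp add: nu_p_def order_le_neq_trans)
    let ?J = "\<integral>x. ?f x * indicator A x \<partial>M"
    have markov: "(u powr p * prob A) * ?nu powr p \<le> ?J"
    proof -
      have "(\<integral>x. (u * ?nu) powr p * indicator A x \<partial>M) \<le> ?J"
      proof (intro integral_mono integrable_real_mult_indicator A moment)
        fix x assume "x \<in> space M"
        show "(u * ?nu) powr p * indicator A x \<le> ?f x * indicator A x"
          using \<open>0 < p\<close> \<open>0 < u\<close> nu
          by (auto simp: A_def indicator_def intro: powr_mono2)
      qed simp
      then show ?thesis using A \<open>0 < u\<close> nu by (simp add: powr_mult ac_simps)
    qed
    have nu_powr_pos: "0 < ?nu powr p" using nu by simp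
    have J_le: "?J \<le> ?nu powr p"
      unfolding moment_eq[symmetric]
      by (rule weighted_integral_bounds(2)[OF moment]) auto
    have "u powr p * prob A \<le> 1"
      by (rule mult_right_le_imp_le[OF _ nu_powr_pos]) (use order_trans[OF markov J_le] in simp)
    then have "(\<integral>x. indicator A x \<partial>M) \<le> 1 / u powr p"
      using A \<open>0 < u\<close> by (simp add: le_divide_eq mult.commute)
    then have "?J \<le> ?rho powr p * ?nu powr p"
      using weighted_central_moment_le_rho_Fp[OF moment \<open>0 < p\<close> nu, of "indicator A"] A
      by (simp add: indicator_def)
    then have "u powr p * prob A \<le> ?rho powr p"
      by (rule mult_right_le_imp_le[OF order_trans[OF markov] nu_powr_pos])
    then show ?thesis
      using \<open>0 < u\<close> unfolding A_def[symmetric] by (simp add: le_divide_eq mult.commute)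
  qed
qed

lemma prob_width_gt_le_binomial:
  fixes X :: "nat \<Rightarrow> 'a \<Rightarrow> real"
  assumes "prob_space M"
    and rv: "\<And>i. i < n \<Longrightarrow> X i \<in> borel_measurable M"
    and indep: "prob_space.indep_vars M (\<lambda>_. borel) X {0..<n}"
    and ident: "\<And>i. i < n \<Longrightarrow> distr M borel (X i) = distr M borel (X 0)"
    and k1: "0 < k1" "k1 \<le> n" and k2: "0 < k2" "k2 \<le> n"
  shows "measure M {w \<in> space M. 2 * r < width n k1 k2 X w}
           \<le> real (n choose min k1 k2) * measure M {w \<in> space M. r < \<bar>X 0 w - c\<bar>} ^ min k1 k2"
proof -
  interpret prob_space M by fact
  define far where "far = {x. r < \<bar>x - c\<bar>}"
  define A where "A i = {w \<in> space M. X i w \<in> far}" for i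
  have far_borel: "far \<in> sets borel" unfolding far_def by measurable
  have indep_A: "indep_events A {0..<n}"
    unfolding A_def using far_borel by (intro indep_eventsI_indep_vars[OF indep]) auto
  have A_vimage: "A i = X i -` far \<inter> space M" for i by (auto simp: A_def)
  have prob_A: "prob (A i) = prob (A 0)" if "i \<in> {0..<n}" for i
    using that rv[of i] rv[of 0] ident[of i] far_borel
    by (simp add: A_vimage measure_distr[symmetric])
  have k_pos: "0 < min k1 k2" using k1 k2 by simp
  have "{w \<in> space M. 2 * r < width n k1 k2 X w}
          \<subseteq> {w \<in> space M. min k1 k2 \<le> card {i \<in> {0..<n}. w \<in> A i}}"
    using min_le_card_far_if_width_gt[OF k1 k2] by (auto simp: A_def far_def)
  then have "measure M {w \<in> space M. 2 * r < width n k1 k2 X w}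
               \<le> prob {w \<in> space M. min k1 k2 \<le> card {i \<in> {0..<n}. w \<in> A i}}"
    by (rule finite_measure_mono) (rule prob_card_indep_events_ge(1)[OF indep_A _ k_pos prob_A], simp_all)
  also have "\<dots> \<le> real (n choose min k1 k2) * prob (A 0) ^ min k1 k2"
    using prob_card_indep_events_ge(2)[OF indep_A _ k_pos prob_A] by simp
  finally show ?thesis by (simp add: A_def far_def)
qed

theorem proposition4p5:
  fixes M :: "'a measure" and X :: "nat \<Rightarrow> 'a \<Rightarrow> real"
    and n k1 k2 :: nat and p t :: real
  assumes "prob_space M"
    and rv: "\<And>i. i < n \<Longrightarrow> X i \<in> borel_measurable M"
    and indep: "prob_space.indep_vars M (\<lambda>_. borel) X {0..<n}"
    and ident: "\<And>i. i < n \<Longrightarrow> distr M borel (X i) = distr M borel (X 0)"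
    and mean: "integrable M (X 0)"
    and p: "p \<ge> 1"
    and moment: "integrable M (\<lambda>x. \<bar>X 0 x - (\<integral>y. X 0 y \<partial>M)\<bar> powr p)"
    and k: "k1 + k2 < n" "min k1 k2 > 0"
    and t: "t > 0"
  shows "measure M {w \<in> space M.
            width n k1 k2 X w > t * nu_p M (X 0) p * (real n / real (min k1 k2)) powr (1 / p)}
         \<le> (exp 1 * 2 powr p * (rho_Fp M (X 0) p ((2 powr p / t powr p) * (real (min k1 k2) / real n))) powr p
              / t powr p) ^ (min k1 k2)"
proof -
  define k where "k = min k1 k2"
  define \<nu> where "\<nu> = nu_p M (X 0) p"
  define R where "R = rho_Fp M (X 0) p ((2 powr p / t powr p) * (real k / real n))"
  define u where "u = t / 2 * (real n / real k) powr (1 / p)"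
  define q where "q = measure M {w \<in> space M. u * \<nu> < \<bar>X 0 w - (\<integral>y. X 0 y \<partial>M)\<bar>}"
  have k_pos: "0 < k" and k_le: "k \<le> k1" "k \<le> k2" "k < n" using k by (auto simp: k_def)
  have u_pos: "0 < u" using t k_pos k_le by (simp add: u_def)
  have u_powr: "u powr p = t powr p / 2 powr p * (real n / real k)"
    using t k_pos k_le p by (simp add: u_def powr_mult powr_divide powr_powr)
  then have "1 / u powr p = 2 powr p / t powr p * (real k / real n)"
    using u_pos t k_pos k_le by (simp add: field_simps)
  then have "q \<le> R powr p / u powr p"
    using prob_central_deviation_le_rho_Fp[OF \<open>prob_space M\<close> rv[of 0] moment _ u_pos] p k_le
    by (simp add: q_def R_def \<nu>_def)
  then have ratio: "exp 1 * real n / real k * q \<le> exp 1 * 2 powr p * R powr p / t powr p"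
    using u_powr u_pos t k_pos k_le by (simp add: field_simps)
  have "measure M {w \<in> space M. t * \<nu> * (real n / real k) powr (1 / p) < width n k1 k2 X w}
      = measure M {w \<in> space M. 2 * (u * \<nu>) < width n k1 k2 X w}"
    by (simp add: u_def mult_ac)
  also have "\<dots> \<le> real (n choose k) * q ^ k"
    unfolding k_def q_def using k
    by (intro prob_width_gt_le_binomial[OF \<open>prob_space M\<close> rv indep ident]) auto
  also have "\<dots> \<le> (exp 1 * real n / real k) ^ k * q ^ k"
    by (rule mult_right_mono[OF binomial_le_exp_pow[OF k_pos]]) (simp add: q_def)
  also have "\<dots> \<le> (exp 1 * 2 powr p * R powr p / t powr p) ^ k"
    unfolding power_mult_distrib[symmetric] using ratio by (intro power_mono) (auto simp: q_def)
  finally show ?thesis by (simp add: k_def \<nu>_def R_def)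
qed

end
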